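(* Let $N,T\ge 1$, let $p_1,\dots,p_N\in[0,1]$, and let $\mathbf U=(U_1,\dots,U_N)$ have independent coordinates $U_i\sim\mathrm{Ber}(p_i)$. Let $G\in\{0,1\}^{T\times N}$ be a fixed testing matrix, with test results $Y_t=1-\prod_{i=1}^N(1-G_{ti}U_i)$ for $t=1,\dots,T$, and DND estimate $\widehat U_i=\prod_{t=1}^T Y_t^{G_{ti}}$ (with $0^0=1$). Define the expected number of errors $$\mathcal E(G)\triangleq\mathbb E\Big[\sum_{i=1}^N \mathbb 1\{\widehat U_i\neq U_i\}\Big].$$ Then $\mathcal E(G)\ge \mathcal E_{LB}(G)$, where $$\mathcal E_{LB}(G)\triangleq\sum_{i=1}^N(1-p_i)\prod_{t=1}^T\Big(1-G_{ti}\prod_{j=1,\,j\neq i}^N(1-G_{tj}p_j)\Big).$$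
   Context: Group testing setup: $N$ individuals, individual $i$ infected ($U_i=1$) independently with known prior probability $p_i$; $G_{ti}=1$ means individual $i$ participates in test $t$; a test is positive iff it contains an infected participant. The Definite Non-Defectives (DND) decoder declares individual $i$ healthy iff $i$ participates in at least one negative test, and infected otherwise. *)

theory Defs
  imports "HOL-Probability.Probability"
begin

text \<open>Individuals are indexed by 0..N-1, tests by 0..T-1.
  G t i is the (0/1-valued) entry of the testing matrix; u i is the infection status.\<close>

definition test_result :: "nat \<Rightarrow> (nat \<Rightarrow> nat \<Rightarrow> nat) \<Rightarrow> (nat \<Rightarrow> bool) \<Rightarrow> nat \<Rightarrow> real" where
  "test_result N G u t = 1 - (\<Prod>i<N. (1 - real (G t i) * of_bool (u i)))"

definition dnd_estimate :: "nat \<Rightarrow> nat \<Rightarrow> (nat \<Rightarrow> nat \<Rightarrow> nat) \<Rightarrow> (nat \<Rightarrow> bool) \<Rightarrow> nat \<Rightarrow> real" where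
  "dnd_estimate N T G u i = (\<Prod>t<T. (test_result N G u t) ^ (G t i))"

definition num_errors :: "nat \<Rightarrow> nat \<Rightarrow> (nat \<Rightarrow> nat \<Rightarrow> nat) \<Rightarrow> (nat \<Rightarrow> bool) \<Rightarrow> real" where
  "num_errors N T G u = (\<Sum>i<N. of_bool (dnd_estimate N T G u i \<noteq> of_bool (u i)))"

definition prior_pmf :: "nat \<Rightarrow> (nat \<Rightarrow> real) \<Rightarrow> (nat \<Rightarrow> bool) pmf" where
  "prior_pmf N p = Pi_pmf {..<N} False (\<lambda>i. bernoulli_pmf (p i))"

definition expected_errors :: "nat \<Rightarrow> nat \<Rightarrow> (nat \<Rightarrow> real) \<Rightarrow> (nat \<Rightarrow> nat \<Rightarrow> nat) \<Rightarrow> real" where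
  "expected_errors N T p G = measure_pmf.expectation (prior_pmf N p) (num_errors N T G)"

definition errors_LB :: "nat \<Rightarrow> nat \<Rightarrow> (nat \<Rightarrow> real) \<Rightarrow> (nat \<Rightarrow> nat \<Rightarrow> nat) \<Rightarrow> real" where
  "errors_LB N T p G = (\<Sum>i<N. (1 - p i) *
     (\<Prod>t<T. (1 - real (G t i) * (\<Prod>j\<in>{..<N} - {i}. (1 - real (G t j) * p j)))))"

end

theory Submission
  imports Defs
begin

text \<open>A healthy individual i is certainly misclassified by DND when no test clears it, i.e. when
  every test containing i also contains another infected individual. Each event ``test t does not
  clear i'' is increasing in the statuses of the other individuals, so by the Harris inequality for
  product Bernoulli measures the probability that no test clears i is at least the product of the
  individual probabilities \<open>1 - G\<^sub>t\<^sub>i \<Prod>\<^sub>j\<^sub>\<noteq>\<^sub>i (1 - G\<^sub>t\<^sub>j p\<^sub>j)\<close>. Since these events do not involve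
  \<open>U\<^sub>i\<close>, independence contributes the factor \<open>1 - p\<^sub>i\<close>; summing over i gives the bound.\<close>

abbreviation bernoulli_Pi_pmf :: "'a set \<Rightarrow> ('a \<Rightarrow> real) \<Rightarrow> ('a \<Rightarrow> bool) pmf" where
  "bernoulli_Pi_pmf A q \<equiv> Pi_pmf A False (\<lambda>i. bernoulli_pmf (q i))"

lemma finite_set_bernoulli_Pi_pmf: "finite A \<Longrightarrow> finite (set_pmf (bernoulli_Pi_pmf A q))"
  by (rule finite_subset[OF set_Pi_pmf_subset' finite_PiE_dflt]) auto

lemma integrable_bernoulli_Pi_pmf [simp, intro]:
  "finite A \<Longrightarrow> integrable (measure_pmf (bernoulli_Pi_pmf A q)) (f :: _ \<Rightarrow> real)"
  by (rule integrable_measure_pmf_finite[OF finite_set_bernoulli_Pi_pmf])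

lemma expectation_bernoulli_Pi_pmf_insert:
  fixes f :: "('a \<Rightarrow> bool) \<Rightarrow> real"
  assumes "finite A" "x \<notin> A" "0 \<le> q x" "q x \<le> 1"
  shows "measure_pmf.expectation (bernoulli_Pi_pmf (insert x A) q) f =
    q x * measure_pmf.expectation (bernoulli_Pi_pmf A q) (\<lambda>u. f (u(x := True))) +
    (1 - q x) * measure_pmf.expectation (bernoulli_Pi_pmf A q) (\<lambda>u. f (u(x := False)))"
    (is "_ = ?rhs")
proof -
  let ?M = "bernoulli_Pi_pmf A q"
  have "bernoulli_Pi_pmf (insert x A) q = bernoulli_pmf (q x) \<bind> (\<lambda>y. map_pmf (\<lambda>u. u(x := y)) ?M)"
    by (simp add: Pi_pmf_insert' assms map_pmf_def)
  also have "measure_pmf.expectation \<dots> f =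
      (\<Sum>y\<in>UNIV. pmf (bernoulli_pmf (q x)) y * measure_pmf.expectation ?M (\<lambda>u. f (u(x := y))))"
    using assms(1) by (subst pmf_expectation_bind[where A=UNIV]) (auto intro: finite_set_bernoulli_Pi_pmf)
  also have "\<dots> = ?rhs"
    using assms(3,4)
    by (simp only: UNIV_bool sum.insert sum.empty finite.intros pmf_bernoulli_True pmf_bernoulli_False) simp
  finally show ?thesis .
qed

lemma harris_inequality:
  fixes f g :: "('a \<Rightarrow> bool) \<Rightarrow> real"
  assumes "finite A" "mono f" "mono g" "\<And>x. x \<in> A \<Longrightarrow> 0 \<le> q x \<and> q x \<le> 1"
  shows "measure_pmf.expectation (bernoulli_Pi_pmf A q) f * measure_pmf.expectation (bernoulli_Pi_pmf A q) g
         \<le> measure_pmf.expectation (bernoulli_Pi_pmf A q) (\<lambda>u. f u * g u)"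
  using assms
proof (induction A arbitrary: f g rule: finite_induct)
  case empty
  then show ?case by simp
next
  case (insert x A)
  let ?E = "measure_pmf.expectation (bernoulli_Pi_pmf A q)"
  have mono_upd: "mono (\<lambda>u. h (u(x := y)))" if "mono h" for h :: "('a \<Rightarrow> bool) \<Rightarrow> real" and y
    by (rule monoI, rule monoD[OF that]) (auto simp: le_fun_def)
  have mono_E: "?E (\<lambda>u. h (u(x := False))) \<le> ?E (\<lambda>u. h (u(x := True)))" if "mono h"
    for h :: "('a \<Rightarrow> bool) \<Rightarrow> real"
    by (rule integral_mono) (auto intro!: monoD[OF that] simp: insert.hyps le_fun_def)
  define F where "F y = ?E (\<lambda>u. f (u(x := y)))" for y
  define G where "G y = ?E (\<lambda>u. g (u(x := y)))" for y
  define H where "H y = ?E (\<lambda>u. f (u(x := y)) * g (u(x := y)))" for y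
  have q: "0 \<le> q x" "q x \<le> 1" using insert.prems by auto
  have "F y * G y \<le> H y" for y
    unfolding F_def G_def H_def
    by (rule insert.IH[OF mono_upd[OF insert.prems(1)] mono_upd[OF insert.prems(2)]])
       (use insert.prems in auto)
  then have "q x * (F True * G True) + (1 - q x) * (F False * G False) \<le> q x * H True + (1 - q x) * H False"
    using q by (intro add_mono mult_left_mono) auto
  moreover have "F False \<le> F True" "G False \<le> G True"
    unfolding F_def G_def by (intro mono_E insert.prems)+
  then have "0 \<le> q x * (1 - q x) * (F True - F False) * (G True - G False)"
    using q by (intro mult_nonneg_nonneg) auto
  \<comment> \<open>the covariance splits into the averaged conditional covariances (IH) and the covariance
      of the conditional means over the coordinate x\<close>
  ultimately have "(q x * F True + (1 - q x) * F False) * (q x * G True + (1 - q x) * G False)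
      \<le> q x * H True + (1 - q x) * H False"
    by (simp add: algebra_simps)
  then show ?case
    using q by (simp add: expectation_bernoulli_Pi_pmf_insert insert.hyps F_def G_def H_def)
qed

lemma harris_inequality_prod:
  fixes h :: "'b \<Rightarrow> ('a \<Rightarrow> bool) \<Rightarrow> real"
  assumes "finite I" "finite A" "\<And>x. x \<in> A \<Longrightarrow> 0 \<le> q x \<and> q x \<le> 1"
    and "\<And>t. t \<in> I \<Longrightarrow> mono (h t)" "\<And>t u. t \<in> I \<Longrightarrow> 0 \<le> h t u"
  shows "(\<Prod>t\<in>I. measure_pmf.expectation (bernoulli_Pi_pmf A q) (h t))
         \<le> measure_pmf.expectation (bernoulli_Pi_pmf A q) (\<lambda>u. \<Prod>t\<in>I. h t u)"
  using assms
proof (induction I rule: finite_induct)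
  case empty
  then show ?case by simp
next
  case (insert s I)
  let ?E = "measure_pmf.expectation (bernoulli_Pi_pmf A q)"
  have "(\<Prod>t\<in>insert s I. ?E (h t)) \<le> ?E (h s) * ?E (\<lambda>u. \<Prod>t\<in>I. h t u)"
    using insert by (auto intro!: mult_left_mono Bochner_Integration.integral_nonneg)
  also have "\<dots> \<le> ?E (\<lambda>u. h s u * (\<Prod>t\<in>I. h t u))"
    using insert.prems
    by (intro harris_inequality monoI prod_mono) (auto dest: monoD intro: prod_nonneg)
  finally show ?case
    using insert.hyps by simp
qed

lemma prod_of_bool:
  "finite B \<Longrightarrow> (\<Prod>j\<in>B. of_bool (P j) :: 'a :: comm_semiring_1) = of_bool (\<forall>j\<in>B. P j)"
  by (induction B rule: finite_induct) auto

lemma one_minus_of_nat_mult_of_bool: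
  "n \<le> 1 \<Longrightarrow> 1 - real n * of_bool b = of_bool (\<not> (n = 1 \<and> b))"
  by (cases n) auto

lemma test_result_eq_of_bool:
  assumes "\<And>j. j < N \<Longrightarrow> G t j \<le> 1"
  shows "test_result N G u t = of_bool (\<exists>j<N. G t j = 1 \<and> u j)"
proof -
  have "(\<Prod>j<N. 1 - real (G t j) * of_bool (u j)) = (\<Prod>j<N. of_bool (\<not> (G t j = 1 \<and> u j)))"
    using assms by (intro prod.cong) (auto simp: one_minus_of_nat_mult_of_bool)
  then show ?thesis
    unfolding test_result_def by (auto simp: prod_of_bool of_bool_not_iff[symmetric])
qed

lemma dnd_estimate_eq_of_bool:
  assumes "\<And>t j. t < T \<Longrightarrow> j < N \<Longrightarrow> G t j \<le> 1" "i < N"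
  shows "dnd_estimate N T G u i = of_bool (\<forall>t<T. G t i = 1 \<longrightarrow> (\<exists>j<N. G t j = 1 \<and> u j))"
proof -
  have "test_result N G u t ^ G t i = of_bool (G t i = 1 \<longrightarrow> (\<exists>j<N. G t j = 1 \<and> u j))" if "t < T" for t
  proof -
    have "G t i = 0 \<or> G t i = 1"
      using assms that by (metis le_neq_implies_less less_one)
    then show ?thesis
      using assms that by (auto simp: test_result_eq_of_bool)
  qed
  then have "dnd_estimate N T G u i = (\<Prod>t<T. of_bool (G t i = 1 \<longrightarrow> (\<exists>j<N. G t j = 1 \<and> u j)))"
    unfolding dnd_estimate_def by (intro prod.cong) auto
  then show ?thesis
    by (auto simp: prod_of_bool)
qed

lemma prob_bernoulli_Pi_pmf_none_marked:
  assumes "finite B" "\<And>j. j \<in> B \<Longrightarrow> 0 \<le> p j \<and> p j \<le> 1"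
  shows "measure_pmf.expectation (bernoulli_Pi_pmf B p) (\<lambda>u. of_bool (\<forall>j\<in>B. a j \<longrightarrow> \<not> u j))
         = (\<Prod>j\<in>B. 1 - of_bool (a j) * p j)"
proof -
  have "measure_pmf.expectation (bernoulli_Pi_pmf B p) (\<lambda>u. \<Prod>j\<in>B. of_bool (a j \<longrightarrow> \<not> u j) :: real)
        = (\<Prod>j\<in>B. measure_pmf.expectation (bernoulli_pmf (p j)) (\<lambda>v. of_bool (a j \<longrightarrow> \<not> v)))"
    using assms(1)
    by (rule expectation_prod_Pi_pmf[where p="\<lambda>j. bernoulli_pmf (p j)" and f="\<lambda>j v. of_bool (a j \<longrightarrow> \<not> v)"])
       (auto intro: integrable_measure_pmf_finite)
  also have "\<dots> = (\<Prod>j\<in>B. 1 - of_bool (a j) * p j)"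
    using assms(2) by (intro prod.cong) auto
  finally show ?thesis
    using assms(1) by (simp add: prod_of_bool)
qed

text \<open>Test t clears i when it contains i but no other infected individual. This does not look at
  \<open>u i\<close>; for a healthy i it says exactly that test t is negative.\<close>

definition clears :: "nat \<Rightarrow> (nat \<Rightarrow> nat \<Rightarrow> nat) \<Rightarrow> (nat \<Rightarrow> bool) \<Rightarrow> nat \<Rightarrow> nat \<Rightarrow> bool" where
  "clears N G u i t \<longleftrightarrow> G t i = 1 \<and> (\<forall>j\<in>{..<N} - {i}. G t j = 1 \<longrightarrow> \<not> u j)"

lemma clears_fun_upd_self [simp]: "clears N G (u(i := b)) i t = clears N G u i t"
  by (simp add: clears_def)

lemma mono_not_clears: "mono (\<lambda>u. of_bool (\<not> clears N G u i t) :: real)"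
  by (rule monoI) (auto simp: clears_def le_fun_def)

lemma dnd_estimate_wrong_if_never_cleared:
  assumes "\<And>t j. t < T \<Longrightarrow> j < N \<Longrightarrow> G t j \<le> 1" "i < N" "\<not> u i"
    and "\<And>t. t < T \<Longrightarrow> \<not> clears N G u i t"
  shows "dnd_estimate N T G u i \<noteq> of_bool (u i)"
proof -
  have "G t i = 1 \<longrightarrow> (\<exists>j<N. G t j = 1 \<and> u j)" if "t < T" for t
    using assms(4)[OF that] by (auto simp: clears_def)
  then show ?thesis
    using assms by (simp add: dnd_estimate_eq_of_bool)
qed

lemma prob_not_clears:
  assumes "\<And>j. j < N \<Longrightarrow> G t j \<le> 1" "\<And>j. j < N \<Longrightarrow> 0 \<le> p j \<and> p j \<le> 1" "i < N"
  shows "measure_pmf.expectation (bernoulli_Pi_pmf ({..<N} - {i}) p) (\<lambda>u. of_bool (\<not> clears N G u i t))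
         = 1 - real (G t i) * (\<Prod>j\<in>{..<N} - {i}. 1 - real (G t j) * p j)"
proof -
  let ?B = "{..<N} - {i}"
  let ?E = "measure_pmf.expectation (bernoulli_Pi_pmf ?B p)"
  have G_cases: "G t j = 0 \<or> G t j = 1" if "j < N" for j
    using assms(1)[OF that] by auto
  have "?E (\<lambda>u. of_bool (\<not> clears N G u i t))
        = ?E (\<lambda>u. 1 - of_bool (G t i = 1) * of_bool (\<forall>j\<in>?B. G t j = 1 \<longrightarrow> \<not> u j) :: real)"
    by (intro Bochner_Integration.integral_cong refl) (auto simp: clears_def)
  also have "\<dots> = 1 - of_bool (G t i = 1) * ?E (\<lambda>u. of_bool (\<forall>j\<in>?B. G t j = 1 \<longrightarrow> \<not> u j))"
    by simp
  also have "\<dots> = 1 - of_bool (G t i = 1) * (\<Prod>j\<in>?B. 1 - of_bool (G t j = 1) * p j)"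
    using prob_bernoulli_Pi_pmf_none_marked[of ?B p "\<lambda>j. G t j = 1"] assms(2) by simp
  also have "\<dots> = 1 - real (G t i) * (\<Prod>j\<in>?B. 1 - real (G t j) * p j)"
  proof -
    have "(\<Prod>j\<in>?B. 1 - of_bool (G t j = 1) * p j) = (\<Prod>j\<in>?B. 1 - real (G t j) * p j)"
      using G_cases by (intro prod.cong) force+
    then show ?thesis
      using G_cases[OF assms(3)] by auto
  qed
  finally show ?thesis .
qed

lemma expected_dnd_error_ge:
  assumes G: "\<And>t j. t < T \<Longrightarrow> j < N \<Longrightarrow> G t j \<le> 1"
    and p: "\<And>j. j < N \<Longrightarrow> 0 \<le> p j \<and> p j \<le> 1" and "i < N"
  shows "(1 - p i) * (\<Prod>t<T. 1 - real (G t i) * (\<Prod>j\<in>{..<N} - {i}. 1 - real (G t j) * p j))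
         \<le> measure_pmf.expectation (prior_pmf N p) (\<lambda>u. of_bool (dnd_estimate N T G u i \<noteq> of_bool (u i)))"
proof -
  let ?B = "{..<N} - {i}"
  let ?E = "measure_pmf.expectation (bernoulli_Pi_pmf ?B p)"
  let ?not_cleared = "\<lambda>u. of_bool (\<forall>t<T. \<not> clears N G u i t) :: real"
  have prior: "prior_pmf N p = bernoulli_Pi_pmf (insert i ?B) p"
    using \<open>i < N\<close> unfolding prior_pmf_def by (simp add: insert_absorb)
  have p_i: "0 \<le> p i" "p i \<le> 1"
    using p[OF \<open>i < N\<close>] by auto
  have "(\<Prod>t<T. 1 - real (G t i) * (\<Prod>j\<in>?B. 1 - real (G t j) * p j))
        = (\<Prod>t<T. ?E (\<lambda>u. of_bool (\<not> clears N G u i t)))"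
    using G p \<open>i < N\<close> by (intro prod.cong) (simp_all add: prob_not_clears)
  also have "\<dots> \<le> ?E (\<lambda>u. \<Prod>t<T. of_bool (\<not> clears N G u i t))"
    using p by (intro harris_inequality_prod mono_not_clears) auto
  also have "\<dots> = ?E ?not_cleared"
    by (simp add: prod_of_bool Ball_def)
  finally have "(1 - p i) * (\<Prod>t<T. 1 - real (G t i) * (\<Prod>j\<in>?B. 1 - real (G t j) * p j))
      \<le> (1 - p i) * ?E ?not_cleared"
    using p_i by (intro mult_left_mono) auto
  also have "\<dots> = measure_pmf.expectation (prior_pmf N p) (\<lambda>u. of_bool (\<not> u i) * ?not_cleared u)"
    unfolding prior by (subst expectation_bernoulli_Pi_pmf_insert) (use p_i in simp_all)
  also have "\<dots> \<le> measure_pmf.expectation (prior_pmf N p) (\<lambda>u. of_bool (dnd_estimate N T G u i \<noteq> of_bool (u i)))"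
    unfolding prior
    by (intro integral_mono integrable_bernoulli_Pi_pmf)
       (use G \<open>i < N\<close> dnd_estimate_wrong_if_never_cleared in auto)
  finally show ?thesis .
qed

theorem theorem1:
  fixes N T :: nat and p :: "nat \<Rightarrow> real" and G :: "nat \<Rightarrow> nat \<Rightarrow> nat"
  assumes "N \<ge> 1" and "T \<ge> 1"
    and "\<And>i. i < N \<Longrightarrow> 0 \<le> p i \<and> p i \<le> 1"
    and "\<And>t i. t < T \<Longrightarrow> i < N \<Longrightarrow> G t i \<le> 1"
  shows "expected_errors N T p G \<ge> errors_LB N T p G"
proof -
  have "expected_errors N T p G
        = (\<Sum>i<N. measure_pmf.expectation (prior_pmf N p) (\<lambda>u. of_bool (dnd_estimate N T G u i \<noteq> of_bool (u i))))"
    unfolding expected_errors_def num_errors_def prior_pmf_def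
    by (intro Bochner_Integration.integral_sum integrable_bernoulli_Pi_pmf) simp
  then show ?thesis
    unfolding errors_LB_def using assms(3,4)
    by (auto intro!: sum_mono expected_dnd_error_ge)
qed

end
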